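(* Let $G$ be a random threshold graph on $n\ge3$ vertices and let $\psi(G)$ be the length of a longest cycle in $G$. Then for every integer $k$ with $3\le k\le n$, $$P(\psi(G)=k)=\left(\tfrac12\right)^{n-1}\left[\binom{n-1}{\lfloor k/2\rfloor}-\binom{k-2}{\lfloor k/2\rfloor}\right].$$
   Context: A threshold graph on $n\ge1$ vertices is built from a base vertex $v_0$ by successively adding $v_1,\dots,v_{n-1}$, each either isolated (adjacent to no earlier vertex) or dominating (adjacent to all earlier vertices); its creation sequence $\mathrm{seq}(G)=s_1\cdots s_{n-1}$ has $s_i=1$ if $v_i$ is dominating and $s_i=0$ otherwise, and each unlabeled threshold graph on $n$ vertices corresponds to exactly one binary string of length $n-1$. A random threshold graph on $n$ vertices is one whose creation sequence is uniformly distributed over all $2^{n-1}$ binary strings of length $n-1$. *)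

theory Defs
  imports "HOL-Probability.Probability"
begin

text \<open>Threshold graph with creation sequence s = s_1 ... s_{n-1} (a bool list of
length n-1, where s ! (i-1) is s_i). Vertices are 0,...,n-1 (v_0 is the base vertex).
For i < j, v_i and v_j are adjacent iff v_j is dominating, i.e. s_j = 1.\<close>

definition tg_vertices :: "bool list \<Rightarrow> nat set" where
  "tg_vertices s = {0..<Suc (length s)}"

definition tg_adj :: "bool list \<Rightarrow> nat \<Rightarrow> nat \<Rightarrow> bool" where
  "tg_adj s i j \<longleftrightarrow> i \<noteq> j \<and> i \<in> tg_vertices s \<and> j \<in> tg_vertices s \<and> s ! (max i j - 1)"

definition tg_is_cycle :: "bool list \<Rightarrow> nat list \<Rightarrow> bool" where
  "tg_is_cycle s c \<longleftrightarrow> 3 \<le> length c \<and> distinct c \<and> set c \<subseteq> tg_vertices s \<and>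
     (\<forall>i < length c. tg_adj s (c ! i) (c ! ((i + 1) mod length c)))"

text \<open>Length of a longest cycle (0 if the graph is acyclic).\<close>

definition longest_cycle :: "bool list \<Rightarrow> nat" where
  "longest_cycle s = Max (insert 0 {length c | c. tg_is_cycle s c})"

end

theory Submission
  imports Defs
begin

text \<open>Read backwards, the creation sequence drives a greedy construction of a long cycle through
  \<open>v\<^sub>0\<close>: every dominating vertex is put at the front of a path, every isolated vertex is slotted
  between the last two dominating vertices at the front, or skipped if there are fewer than two.
  The construction is optimal: for a cut \<open>i\<close>, every isolated vertex above \<open>v\<^sub>i\<close> is followed
  on a cycle by a larger, hence dominating, vertex, and so is every exit of the cycle from
  \<open>{v\<^sub>0, \<dots>, v\<^sub>i}\<close>; thus a cycle has at most \<open>i + 2 D\<^sub>i\<close> vertices, where \<open>D\<^sub>i\<close> is the number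
  of dominating vertices above \<open>v\<^sub>i\<close>, and the cut at the lowest skipped vertex attains the
  greedy length.
  The number of skipped vertices is a reflected \<open>\<plusminus>1\<close> walk, whose distribution is a
  ballot-type binomial count; summing it gives the binomial difference of the theorem.\<close>

subsection \<open>The greedy length and its distribution\<close>

text \<open>\<open>greedy_len d r\<close> is the number of vertices the construction puts on the path while reading
  \<open>r\<close> (the creation sequence from the top vertex downwards), with \<open>d\<close> dominating vertices at the
  front of the path.\<close>

fun greedy_len :: "nat \<Rightarrow> bool list \<Rightarrow> nat" where
  "greedy_len d [] = 0"
| "greedy_len d (True # r) = Suc (greedy_len (Suc d) r)"
| "greedy_len d (False # r) = (if 2 \<le> d then Suc (greedy_len (d - 1) r) else greedy_len d r)"

text \<open>Read from the right with \<open>+1\<close> for isolated and \<open>-1\<close> for dominating vertices, reflected at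
  \<open>0\<close>; it counts the vertices skipped by \<open>greedy_len 1\<close>.\<close>

fun surplus :: "bool list \<Rightarrow> nat" where
  "surplus [] = 0"
| "surplus (True # r) = surplus r - 1"
| "surplus (False # r) = Suc (surplus r)"

lemma surplus_le_length: "surplus r \<le> length r"
  by (induction r rule: surplus.induct) auto

lemma greedy_len_le_length: "greedy_len d r \<le> length r"
  by (induction d r rule: greedy_len.induct) auto

lemma greedy_len_eq_surplus: "1 \<le> d \<Longrightarrow> greedy_len d r = length r - (surplus r - (d - 1))"
proof (induction d r rule: greedy_len.induct)
  case (2 d r)
  then show ?case using surplus_le_length[of r] by simp
next
  case (3 d r)
  then show ?case using surplus_le_length[of r] by auto
qed simp

lemma card_lists_length_Suc:
  "card {r. length r = Suc m \<and> P r} =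
   card {r. length r = m \<and> P (True # r)} + card {r. length r = m \<and> P (False # r)}"
proof -
  have fin: "finite {r. length r = m \<and> P (b # r)}" for b
    by (rule finite_subset[OF _ finite_list_length[of m]]) auto
  have "{r. length r = Suc m \<and> P r} =
      Cons True ` {r. length r = m \<and> P (True # r)} \<union> Cons False ` {r. length r = m \<and> P (False # r)}"
    (is "_ = ?A \<union> ?B")
  proof (intro equalityI subsetI)
    fix x assume "x \<in> {r. length r = Suc m \<and> P r}"
    then obtain b r where "x = b # r" "length r = m" "P (b # r)" by (auto simp: length_Suc_conv)
    then show "x \<in> ?A \<union> ?B" by (cases b) auto
  qed auto
  moreover have "card (?A \<union> ?B) = card ?A + card ?B"
    using fin by (intro card_Un_disjoint) auto
  ultimately show ?thesis by (simp add: card_image)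
qed

definition surplus_count :: "nat \<Rightarrow> nat \<Rightarrow> nat" where
  "surplus_count m a = (if a \<le> m then m choose ((m - a) div 2) else 0)"

lemma surplus_count_Suc:
  "surplus_count (Suc m) a = surplus_count m (Suc a) + surplus_count m (a - 1)"
proof (cases "a \<le> m")
  case True
  then obtain q where m: "m = a + q" using le_Suc_ex by blast
  consider t where "q = 2 * t" | t where "q = Suc (2 * t)" by (metis oddE evenE Suc_eq_plus1)
  then show ?thesis
  proof cases
    case 1
    have "surplus_count m (Suc a) + surplus_count m (a - 1) =
        (if t = 0 then 0 else m choose (t - 1)) + (m choose t)"
    proof -
      have "(m - Suc a) div 2 = t - 1" "(m - (a - 1)) div 2 = t"
        using m 1 by (cases t; cases a; simp)+
      then show ?thesis using m 1 by (auto simp: surplus_count_def)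
    qed
    also have "\<dots> = Suc m choose t" by (cases t) auto
    finally show ?thesis using m 1 by (simp add: surplus_count_def)
  next
    case 2
    have "surplus_count m (a - 1) = m choose Suc t"
    proof (cases a)
      case 0
      then show ?thesis
        using m 2 binomial_symmetric[of t m] by (simp add: surplus_count_def)
    qed (use m 2 in \<open>simp add: surplus_count_def\<close>)
    moreover have "surplus_count m (Suc a) = m choose t"
      using m 2 by (simp add: surplus_count_def)
    ultimately show ?thesis using m 2 by (simp add: surplus_count_def)
  qed
qed (auto simp: surplus_count_def)

lemma card_surplus_eq: "card {r. length r = m \<and> surplus r = a} = surplus_count m a"
proof (induction m arbitrary: a)
  case 0
  have "{r. length r = 0 \<and> surplus r = a} = (if a = 0 then {[]} else {})" by auto
  then show ?case by (simp add: surplus_count_def)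
next
  case (Suc m)
  let ?S = "\<lambda>b. {r. length r = m \<and> surplus r = b}"
  have fin: "finite (?S b)" for b
    by (rule finite_subset[OF _ finite_list_length[of m]]) auto
  have "card {r. length r = Suc m \<and> surplus r = a} =
      card {r. length r = m \<and> surplus r - 1 = a} + card {r. length r = m \<and> Suc (surplus r) = a}"
    by (simp add: card_lists_length_Suc)
  also have "\<dots> = surplus_count m (Suc a) + surplus_count m (a - 1)"
  proof (cases a)
    case 0
    then have "{r. length r = m \<and> surplus r - 1 = a} = ?S 1 \<union> ?S 0"
      and "{r. length r = m \<and> Suc (surplus r) = a} = {}" by auto
    then show ?thesis using 0 Suc.IH fin by (simp add: card_Un_disjoint disjoint_iff)
  next
    case (Suc b)
    then have "{r. length r = m \<and> surplus r - 1 = a} = ?S (Suc a)"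
      and "{r. length r = m \<and> Suc (surplus r) = a} = ?S b" by auto
    then show ?thesis using Suc Suc.IH by simp
  qed
  also have "\<dots> = surplus_count (Suc m) a" by (rule surplus_count_Suc[symmetric])
  finally show ?case .
qed

lemma card_greedy_len_1:
  assumes "i \<le> m"
  shows "card {r. length r = m \<and> greedy_len 1 r = i} = m choose (i div 2)"
proof -
  have "greedy_len 1 r = i \<longleftrightarrow> surplus r = m - i" if "length r = m" for r
    using that assms surplus_le_length[of r] greedy_len_eq_surplus[of 1 r] by auto
  then have "{r. length r = m \<and> greedy_len 1 r = i} = {r. length r = m \<and> surplus r = m - i}"
    by blast
  then show ?thesis using assms by (simp add: card_surplus_eq surplus_count_def)
qed

lemma card_greedy_len_0:
  assumes "i \<le> m"
  shows "card {r. length r = m \<and> greedy_len 0 r = Suc i} + (i choose (i div 2 + 1))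
    = m choose (i div 2 + 1)"
  using assms
proof (induction m)
  case 0
  moreover have "{r. length r = 0 \<and> greedy_len 0 r = Suc i} = {}" by auto
  ultimately show ?case by simp
next
  case (Suc m)
  show ?case
  proof (cases "i = Suc m")
    case True
    have "greedy_len 0 r \<noteq> Suc i" if "length r = Suc m" for r
      using greedy_len_le_length[of 0 r] that True by simp
    then have "{r. length r = Suc m \<and> greedy_len 0 r = Suc i} = {}" by blast
    then show ?thesis by (simp only: card.empty add_0 True)
  next
    case False
    then have "i \<le> m" using Suc.prems by simp
    have "card {r. length r = Suc m \<and> greedy_len 0 r = Suc i} =
        card {r. length r = m \<and> greedy_len 1 r = i} + card {r. length r = m \<and> greedy_len 0 r = Suc i}"
      by (simp add: card_lists_length_Suc)
    then show ?thesis using Suc.IH[OF \<open>i \<le> m\<close>] card_greedy_len_1[OF \<open>i \<le> m\<close>] by simp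
  qed
qed

subsection \<open>Upper bound: cuts\<close>

text \<open>The certificate of optimality: \<open>q\<close> counts the vertices from the lowest skipped isolated
  vertex upwards.\<close>

lemma greedy_len_cut_bound:
  "1 \<le> d \<Longrightarrow> greedy_len d r = length r \<or>
    (\<exists>q \<le> length r. length r - q + 2 * count_list (take q r) True + d \<le> greedy_len d r + 1)"
proof (induction d r rule: greedy_len.induct)
  case (2 d r)
  then consider "greedy_len (Suc d) r = length r"
    | q where "q \<le> length r"
        "length r - q + 2 * count_list (take q r) True + Suc d \<le> greedy_len (Suc d) r + 1"
    by auto
  then show ?case
  proof cases
    case 2
    then show ?thesis by (intro disjI2 exI[of _ "Suc q"]) auto
  qed simp
next
  case (3 d r)
  show ?case
  proof (cases "2 \<le> d")
    case True
    have "1 \<le> d - 1" using True by simp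
    from "3.IH"(1)[OF True this] consider "greedy_len (d - 1) r = length r"
      | q where "q \<le> length r"
          "length r - q + 2 * count_list (take q r) True + (d - 1) \<le> greedy_len (d - 1) r + 1"
      by blast
    then show ?thesis
    proof cases
      case 2
      then show ?thesis using True by (intro disjI2 exI[of _ "Suc q"]) auto
    qed (use True in simp)
  next
    case False
    then have "d = 1" using "3.prems" by simp
    from "3.IH"(2) False "3.prems" consider "greedy_len d r = length r"
      | q where "q \<le> length r"
          "length r - q + 2 * count_list (take q r) True + d \<le> greedy_len d r + 1"
      by auto
    then show ?thesis
    proof cases
      case 1
      then show ?thesis using \<open>d = 1\<close> by (intro disjI2 exI[of _ 1]) simp
    next
      case 2
      then show ?thesis using \<open>d = 1\<close> by (intro disjI2 exI[of _ "Suc q"]) simp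
    qed
  qed
qed simp

lemma greedy_len_0_cut_bound:
  "True \<in> set r \<Longrightarrow> \<exists>q. 1 \<le> q \<and> q \<le> length r \<and> True \<in> set (take q r) \<and>
     length r - q + 2 * count_list (take q r) True \<le> greedy_len 0 r + 1"
proof (induction r)
  case (Cons x r)
  show ?case
  proof (cases x)
    case True
    have "\<exists>q \<le> length r. length r - q + 2 * count_list (take q r) True \<le> greedy_len 1 r"
      using greedy_len_cut_bound[of 1 r] by (auto intro: exI[of _ 0])
    then obtain q where
      "q \<le> length r" "length r - q + 2 * count_list (take q r) True \<le> greedy_len 1 r"
      by blast
    then show ?thesis using True by (intro exI[of _ "Suc q"]) auto
  next
    case False
    with Cons obtain q where "1 \<le> q" "q \<le> length r" "True \<in> set (take q r)"
      "length r - q + 2 * count_list (take q r) True \<le> greedy_len 0 r + 1" by auto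
    then show ?thesis using False by (intro exI[of _ "Suc q"]) auto
  qed
qed simp

lemma exists_cut_le_greedy_len:
  assumes "True \<in> set s"
  shows "\<exists>i. True \<in> set (drop i s) \<and> i + 2 * count_list (drop i s) True \<le> greedy_len 0 (rev s) + 1"
proof -
  obtain q where "q \<le> length s" "True \<in> set (take q (rev s))"
      "length s - q + 2 * count_list (take q (rev s)) True \<le> greedy_len 0 (rev s) + 1"
    using greedy_len_0_cut_bound[of "rev s"] assms by auto
  then show ?thesis
    by (intro exI[of _ "length s - q"]) (simp add: take_rev)
qed

lemma card_dominating_above:
  "card {v. i < v \<and> v \<le> length s \<and> s ! (v - 1)} = count_list (drop i s) True"
proof -
  have "{v. i < v \<and> v \<le> length s \<and> s ! (v - 1)} =
      (\<lambda>j. j + i + 1) ` {j. j < length (drop i s) \<and> drop i s ! j}"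
  proof (rule set_eqI, rule iffI)
    fix v assume "v \<in> {v. i < v \<and> v \<le> length s \<and> s ! (v - 1)}"
    then show "v \<in> (\<lambda>j. j + i + 1) ` {j. j < length (drop i s) \<and> drop i s ! j}"
      by (intro image_eqI[of _ _ "v - i - 1"]) auto
  qed (auto simp: add.commute)
  then show ?thesis
    by (simp add: card_image inj_on_def count_list_eq_length_filter length_filter_conv_card)
qed

lemma card_positions_le:
  assumes "distinct c" "\<And>v. v \<in> set c \<Longrightarrow> P v \<Longrightarrow> v \<in> A" "finite A"
  shows "card {j. j < length c \<and> P (c ! j)} \<le> card A"
proof -
  have "card {j. j < length c \<and> P (c ! j)} = card (nth c ` {j. j < length c \<and> P (c ! j)})"
    using assms(1) by (intro card_image[symmetric] inj_on_nth) auto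
  also have "\<dots> \<le> card A"
    using assms(2,3) by (intro card_mono) auto
  finally show ?thesis .
qed

lemma card_cycle_positions_le:
  "distinct c \<Longrightarrow> card {j. j < length c \<and> c ! j \<le> i} \<le> i + 1"
  using card_positions_le[of c "\<lambda>v. v \<le> i" "{..i}"] by simp

lemma card_cycle_positions_dominating:
  assumes "tg_is_cycle s c"
  shows "card {j. j < length c \<and> i < c ! j \<and> s ! (c ! j - 1)} \<le> count_list (drop i s) True"
proof -
  have "card {j. j < length c \<and> i < c ! j \<and> s ! (c ! j - 1)}
      \<le> card {v. i < v \<and> v \<le> length s \<and> s ! (v - 1)}"
    using assms by (intro card_positions_le) (auto simp: tg_is_cycle_def tg_vertices_def)
  then show ?thesis by (simp only: card_dominating_above)
qed

lemma exists_Suc_mod_notin: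
  assumes "j0 \<in> L" "j0 < k" "j < k" "j \<notin> L"
  shows "\<exists>j\<in>L. Suc j mod k \<notin> L"
proof (rule ccontr)
  assume "\<not> ?thesis"
  then have "(j0 + l) mod k \<in> L" for l
    by (induction l) (use assms(1,2) in \<open>auto simp: mod_Suc_eq\<close>)
  from this[of "k - j0 + j"] show False using assms(2-4) by simp
qed

lemma card_le_Suc_mod_image:
  assumes "A \<subseteq> {..<k}" "(\<lambda>j. Suc j mod k) ` A \<subseteq> B" "finite B"
  shows "card A \<le> card B"
proof -
  have "inj_on (\<lambda>j. Suc j mod k) {..<k}"
    by (auto simp: inj_on_def mod_Suc split: if_splits)
  then have "inj_on (\<lambda>j. Suc j mod k) A" using assms(1) by (rule inj_on_subset)
  then show ?thesis using card_mono[OF assms(3,2)] by (simp add: card_image)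
qed

text \<open>A high isolated vertex and the last low vertex before the cycle climbs above
  \<open>v\<^sub>i\<close> are both followed by a larger vertex, which must be dominating.\<close>

lemma cycle_length_le_cut:
  assumes cyc: "tg_is_cycle s c" and dom: "True \<in> set (drop i s)"
  shows "length c \<le> i + 2 * count_list (drop i s) True"
proof -
  define k where "k = length c"
  define succ where "succ j = Suc j mod k" for j
  define low where "low = {j. j < k \<and> c ! j \<le> i}"
  define high_iso where "high_iso = {j. j < k \<and> i < c ! j \<and> \<not> s ! (c ! j - 1)}"
  define high_dom where "high_dom = {j. j < k \<and> i < c ! j \<and> s ! (c ! j - 1)}"
  define exits where "exits = {j \<in> low. succ j \<notin> low}"
  have "3 \<le> k" "distinct c" using cyc by (auto simp: tg_is_cycle_def k_def)
  have fin: "finite low" "finite high_iso" "finite high_dom"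
    by (auto simp: low_def high_iso_def high_dom_def)
  have card_low: "card low \<le> i + 1"
    using card_cycle_positions_le[OF \<open>distinct c\<close>] by (simp add: low_def k_def)
  have card_high_dom: "card high_dom \<le> count_list (drop i s) True"
    using card_cycle_positions_dominating[OF cyc] by (simp add: high_dom_def k_def)
  have step: "c ! j \<noteq> c ! succ j \<and> s ! (max (c ! j) (c ! succ j) - 1)" if "j < k" for j
    using cyc that by (auto simp: tg_is_cycle_def tg_adj_def succ_def k_def)
  have "succ j < k" for j using \<open>3 \<le> k\<close> by (simp add: succ_def)
  then have "succ ` (high_iso \<union> exits) \<subseteq> high_dom"
    using step
    by (fastforce simp: high_iso_def high_dom_def exits_def low_def max_def split: if_splits)
  then have "card (high_iso \<union> exits) \<le> card high_dom"
    using fin by (intro card_le_Suc_mod_image[where k = k])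
      (auto simp: succ_def high_iso_def exits_def low_def)
  then have inj: "card high_iso + card exits \<le> card high_dom"
    using fin by (simp add: card_Un_disjoint exits_def low_def high_iso_def disjoint_iff)
  have "k = card (low \<union> high_iso \<union> high_dom)"
    by (rule arg_cong[where f = card, of "{..<k}", simplified])
      (auto simp: low_def high_iso_def high_dom_def)
  then have k: "k = card low + card high_iso + card high_dom"
    using fin by (simp add: card_Un_disjoint low_def high_iso_def high_dom_def disjoint_iff)
  have "1 \<le> count_list (drop i s) True"
    using dom count_list_0_iff[of "drop i s" True] by linarith
  consider "low = {}" | "exits \<noteq> {}" | "\<forall>j<k. j \<in> low"
    using exists_Suc_mod_notin[of _ low k] by (auto simp: exits_def succ_def low_def)
  then show ?thesis
  proof cases
    case 1
    then show ?thesis using k card_high_dom inj by (simp add: k_def)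
  next
    case 2
    then have "1 \<le> card exits" using fin by (simp add: exits_def Suc_le_eq card_gt_0_iff)
    then show ?thesis using k card_low card_high_dom inj by (simp add: k_def)
  next
    case 3
    then have "high_iso = {}" "high_dom = {}" by (auto simp: high_iso_def high_dom_def low_def)
    with k card_low \<open>1 \<le> count_list (drop i s) True\<close> show ?thesis by (simp add: k_def)
  qed
qed

lemma tg_adj_imp_dominating: "tg_adj s u v \<Longrightarrow> True \<in> set s"
  by (auto simp: tg_adj_def tg_vertices_def in_set_conv_nth intro!: exI[of _ "max u v - 1"])

lemma cycle_length_le_greedy_len:
  assumes "tg_is_cycle s c"
  shows "length c \<le> greedy_len 0 (rev s) + 1"
proof -
  have "tg_adj s (c ! 0) (c ! (1 mod length c))"
    using assms unfolding tg_is_cycle_def by (metis add_0 gr0I not_numeral_le_zero list.size(3))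
  then obtain i where "True \<in> set (drop i s)"
    and "i + 2 * count_list (drop i s) True \<le> greedy_len 0 (rev s) + 1"
    using tg_adj_imp_dominating exists_cut_le_greedy_len by blast
  with cycle_length_le_cut[OF assms] show ?thesis by fastforce
qed

subsection \<open>Lower bound: the greedy cycle\<close>

text \<open>\<open>F @ T\<close> is a path on the vertices above \<open>v\<^sub>l\<close> whose front \<open>F\<close> consists of dominating
  vertices, so that \<open>v\<^sub>l\<close> is adjacent to all of them. Its last vertex is dominating as well,
  which lets the finished path close into a cycle through \<open>v\<^sub>0\<close>.\<close>

definition greedy_path_inv :: "bool list \<Rightarrow> nat \<Rightarrow> nat list \<Rightarrow> nat list \<Rightarrow> bool" where
  "greedy_path_inv s l F T \<longleftrightarrow>
     distinct (F @ T) \<and> set (F @ T) \<subseteq> {l<..length s} \<and> successively (tg_adj s) (F @ T) \<and>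
     (\<forall>v\<in>set F. s ! (v - 1)) \<and> (F = [] \<longrightarrow> T = []) \<and> (T \<noteq> [] \<longrightarrow> s ! (last T - 1))"

lemma tg_adj_if_dominating:
  "u < v \<Longrightarrow> v \<le> length s \<Longrightarrow> s ! (v - 1) \<Longrightarrow> tg_adj s u v \<and> tg_adj s v u"
  by (auto simp: tg_adj_def tg_vertices_def max_def)

lemma greedy_path_inv_mono: "greedy_path_inv s (Suc l) F T \<Longrightarrow> greedy_path_inv s l F T"
  by (auto simp: greedy_path_inv_def)

lemma greedy_path_inv_dominating:
  assumes "l < length s" "s ! l" "greedy_path_inv s (Suc l) F T"
  shows "greedy_path_inv s l (Suc l # F) T"
proof -
  have "successively (tg_adj s) (Suc l # F @ T)"
  proof (cases F)
    case (Cons a F')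
    then have "tg_adj s (Suc l) a"
      using assms(3) tg_adj_if_dominating by (auto simp: greedy_path_inv_def)
    then show ?thesis using assms(3) Cons by (simp add: greedy_path_inv_def)
  qed (use assms(3) in \<open>simp add: greedy_path_inv_def\<close>)
  then show ?thesis using assms by (auto simp: greedy_path_inv_def)
qed

lemma greedy_path_inv_isolated:
  assumes "l < length s" "greedy_path_inv s (Suc l) (F @ [a, b]) T"
  shows "greedy_path_inv s l (F @ [a]) (Suc l # b # T)"
proof -
  have "Suc l < a" "Suc l < b" "a \<le> length s" "b \<le> length s" "s ! (a - 1)" "s ! (b - 1)"
    using assms(2) by (auto simp: greedy_path_inv_def)
  then have "tg_adj s a (Suc l)" "tg_adj s (Suc l) b"
    using tg_adj_if_dominating by blast+
  then show ?thesis
    using assms by (auto simp: greedy_path_inv_def successively_append_iff)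
qed

lemma greedy_path_exists:
  "l \<le> length s \<Longrightarrow> greedy_path_inv s l F T \<Longrightarrow>
   \<exists>F' T'. greedy_path_inv s 0 F' T' \<and>
     length (F' @ T') = length (F @ T) + greedy_len (length F) (rev (take l s))"
proof (induction l arbitrary: F T)
  case 0
  then show ?case by auto
next
  case (Suc l)
  then have l: "l < length s" by simp
  then have rev_take: "rev (take (Suc l) s) = s ! l # rev (take l s)"
    by (simp add: take_Suc_conv_app_nth)
  have IH: "\<exists>F' T'. greedy_path_inv s 0 F' T' \<and>
      length (F' @ T') = length (F0 @ T0) + greedy_len (length F0) (rev (take l s))"
    if "greedy_path_inv s l F0 T0" for F0 T0
    using Suc.IH[OF _ that] l by simp
  consider "s ! l" | "\<not> s ! l" "2 \<le> length F" | "\<not> s ! l" "length F < 2" by linarith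
  then show ?case
  proof cases
    case 1
    then obtain F' T' where "greedy_path_inv s 0 F' T'"
      "length (F' @ T') = length (Suc l # F @ T) + greedy_len (length (Suc l # F)) (rev (take l s))"
      using IH[OF greedy_path_inv_dominating[OF l 1 Suc.prems(2)]] by auto
    then show ?thesis using 1 rev_take by (intro exI[of _ F'] exI[of _ T']) simp
  next
    case 2
    then have "butlast F \<noteq> []" by (cases F rule: rev_cases) auto
    then obtain F0 a b where F: "F = F0 @ [a, b]"
      using 2 by (metis append_butlast_last_id append_assoc append_Cons append_Nil list.size(3)
          not_numeral_le_zero)
    obtain F' T' where "greedy_path_inv s 0 F' T'"
      "length (F' @ T') = length (F @ T) + 1 + greedy_len (length F - 1) (rev (take l s))"
      using IH[OF greedy_path_inv_isolated[OF l Suc.prems(2)[unfolded F]]] F by auto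
    then show ?thesis using 2 rev_take by (intro exI[of _ F'] exI[of _ T']) simp
  next
    case 3
    then obtain F' T' where "greedy_path_inv s 0 F' T'"
      "length (F' @ T') = length (F @ T) + greedy_len (length F) (rev (take l s))"
      using IH[OF greedy_path_inv_mono[OF Suc.prems(2)]] by auto
    then show ?thesis using 3 rev_take by (intro exI[of _ F'] exI[of _ T']) simp
  qed
qed

lemma successively_cyclic_nth:
  assumes "successively R (xs @ [hd xs])" "i < length xs"
  shows "R (xs ! i) (xs ! (Suc i mod length xs))"
proof -
  have "R ((xs @ [hd xs]) ! i) ((xs @ [hd xs]) ! Suc i)"
    using successively_nth[OF assms(1)] assms(2) by simp
  moreover have "(xs @ [hd xs]) ! Suc i = xs ! (Suc i mod length xs)"
  proof (cases "Suc i = length xs")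
    case True
    then have "xs \<noteq> []" by auto
    with True show ?thesis by (simp add: nth_append hd_conv_nth)
  qed (use assms(2) in \<open>simp add: nth_append\<close>)
  ultimately show ?thesis using assms(2) by (simp add: nth_append)
qed

lemma exists_cycle_greedy_len:
  assumes "2 \<le> greedy_len 0 (rev s)"
  shows "\<exists>c. tg_is_cycle s c \<and> length c = greedy_len 0 (rev s) + 1"
proof -
  obtain F T where inv: "greedy_path_inv s 0 F T" and len: "length (F @ T) = greedy_len 0 (rev s)"
    using greedy_path_exists[of "length s" s "[]" "[]"] by (auto simp: greedy_path_inv_def)
  define P where "P = F @ T"
  have "F \<noteq> []" using inv len assms by (auto simp: greedy_path_inv_def)
  have dom: "s ! (hd P - 1)" "s ! (last P - 1)"
    using inv \<open>F \<noteq> []\<close> by (auto simp: P_def greedy_path_inv_def last_append)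
  have P: "distinct P" "set P \<subseteq> {0<..length s}" "successively (tg_adj s) P"
    using inv by (auto simp: P_def greedy_path_inv_def)
  have "P \<noteq> []" using \<open>F \<noteq> []\<close> by (simp add: P_def)
  then have "hd P \<in> set P" "last P \<in> set P" by simp_all
  then have "tg_adj s 0 (hd P)" "tg_adj s (last P) 0"
    using P(2) dom tg_adj_if_dominating[of 0 "hd P" s] tg_adj_if_dominating[of 0 "last P" s]
    by auto
  then have "successively (tg_adj s) ((0 # P) @ [hd (0 # P)])"
    using P(3) \<open>P \<noteq> []\<close> by (simp add: successively_append_iff successively_Cons)
  then have "tg_adj s ((0 # P) ! i) ((0 # P) ! ((i + 1) mod length (0 # P)))"
    if "i < length (0 # P)" for i
    using successively_cyclic_nth[OF _ that] by simp
  moreover have "length (0 # P) = greedy_len 0 (rev s) + 1" using len by (simp add: P_def)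
  ultimately have "tg_is_cycle s (0 # P)"
    using P(1,2) assms by (fastforce simp: tg_is_cycle_def tg_vertices_def)
  with \<open>length (0 # P) = greedy_len 0 (rev s) + 1\<close> show ?thesis by blast
qed

lemma longest_cycle_eq:
  "longest_cycle s = (if 2 \<le> greedy_len 0 (rev s) then greedy_len 0 (rev s) + 1 else 0)"
proof -
  let ?g = "greedy_len 0 (rev s)"
  define C where "C = {length c |c. tg_is_cycle s c}"
  have C: "x \<in> C \<Longrightarrow> 3 \<le> x \<and> x \<le> ?g + 1" for x
    using cycle_length_le_greedy_len by (auto simp: C_def tg_is_cycle_def)
  then have "finite (insert 0 C)" by (meson finite_atMost finite_insert finite_subset subsetI atMost_iff)
  show ?thesis
  proof (cases "2 \<le> ?g")
    case True
    then have "?g + 1 \<in> C" using exists_cycle_greedy_len unfolding C_def by force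
    then have "Max (insert 0 C) = ?g + 1"
      using C \<open>finite (insert 0 C)\<close> by (intro Max_eqI) auto
    then show ?thesis using True by (simp add: longest_cycle_def C_def)
  next
    case False
    then have "C = {}" using C by force
    then show ?thesis using False by (simp add: longest_cycle_def C_def)
  qed
qed

subsection \<open>The distribution of the longest cycle\<close>

lemma card_longest_cycle_eq:
  assumes "3 \<le> k" "k \<le> Suc m"
  shows "card {s :: bool list. length s = m \<and> longest_cycle s = k} + ((k - 2) choose (k div 2))
    = m choose (k div 2)"
proof -
  have "longest_cycle s = k \<longleftrightarrow> greedy_len 0 (rev s) = Suc (k - 2)" for s
    using assms(1) by (auto simp: longest_cycle_eq)
  then have "{s. length s = m \<and> longest_cycle s = k} =
      rev -` {r. length r = m \<and> greedy_len 0 r = Suc (k - 2)}"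
    by simp
  moreover have "card (rev -` {r. length r = m \<and> greedy_len 0 r = Suc (k - 2)}) =
      card {r. length r = m \<and> greedy_len 0 r = Suc (k - 2)}"
    using surjI[of rev rev] by (intro card_vimage_inj) auto
  ultimately have "card {s. length s = m \<and> longest_cycle s = k} =
      card {r. length r = m \<and> greedy_len 0 r = Suc (k - 2)}"
    by (simp only:)
  moreover have "(k - 2) div 2 + 1 = k div 2" using assms(1) by linarith
  ultimately show ?thesis using card_greedy_len_0[of "k - 2" m] assms by simp
qed

theorem mainTheorem10:
  fixes n k :: nat
  assumes "3 \<le> n" and "3 \<le> k" and "k \<le> n"
  shows "measure_pmf.prob (pmf_of_set {s :: bool list. length s = n - 1})
           {s. longest_cycle s = k}
         = (1/2) ^ (n - 1) * (real ((n - 1) choose (k div 2)) - real ((k - 2) choose (k div 2)))"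
proof -
  define m where "m = n - 1"
  define S where "S = {s :: bool list. length s = m}"
  have "finite S" and card_S: "card S = 2 ^ m"
    using card_lists_length_eq[of "UNIV :: bool set" m] by (simp_all add: S_def finite_list_length)
  then have "S \<noteq> {}" by auto
  have "card (S \<inter> {s. longest_cycle s = k}) + ((k - 2) choose (k div 2)) = m choose (k div 2)"
    using card_longest_cycle_eq[of k m] assms by (simp add: S_def m_def Int_def conj_commute)
  then have card_cycle: "real (card (S \<inter> {s. longest_cycle s = k}))
      = real (m choose (k div 2)) - real ((k - 2) choose (k div 2))"
    by (metis add_diff_cancel_right' of_nat_add)
  have "measure_pmf.prob (pmf_of_set S) {s. longest_cycle s = k} =
      real (card (S \<inter> {s. longest_cycle s = k})) / real (card S)"
    by (rule measure_pmf_of_set[OF \<open>S \<noteq> {}\<close> \<open>finite S\<close>])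
  also have "\<dots> = (1/2) ^ m * (real (m choose (k div 2)) - real ((k - 2) choose (k div 2)))"
    unfolding card_cycle card_S by (simp add: power_one_over)
  finally show ?thesis unfolding S_def m_def .
qed

end
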